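(* Let $\mathbb{D}=\{z\in\mathbb{C}:|z|<1\}$ and let $F:\mathbb{D}\to\mathbb{C}$ be a function (no regularity assumed) such that $0\le \operatorname{Re}F(z)\le 1$ for all $z\in\mathbb{D}$ and such that the function $z\mapsto F(z)+z\overline{F(z)}$ is holomorphic on $\mathbb{D}$. Then $F$ is constant.
   Context: $\operatorname{Re}$ denotes the real part of a complex number and $\overline{w}$ the complex conjugate of $w$. *)

theory Defs
  imports "HOL-Analysis.Analysis"
begin

end

theory Submission
  imports Defs "HOL-Complex_Analysis.Complex_Analysis"
begin

text \<open>
  Put \<open>P z = (F z + z * cnj (F z)) / (1 - z)\<close>. Then \<open>Re (P z) = (1 - |z|\<^sup>2) Re (F z) / |1 - z|\<^sup>2\<close>,
  and the same formula with \<open>1 - F\<close> in place of \<open>F\<close> describes \<open>(1 + z) / (1 - z) - P z\<close>; so the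
  kernel \<open>(1 + z) / (1 - z)\<close> splits into two holomorphic functions with nonnegative real part.
  Such functions satisfy Caratheodory's inequality \<open>|f'(0)| \<le> 2 Re f(0)\<close> (Schwarz's lemma after a
  Cayley transform), and the kernel attains it with \<open>f'(0) = 2 = 2 Re f(0)\<close>. Hence \<open>P\<close> attains
  it too, which forces \<open>P\<close> to be the extremal function \<open>(c + cnj c z) / (1 - z)\<close> with \<open>c = F 0\<close>. Thus \<open>F z - c = - z cnj (F z - c)\<close>,
  and \<open>|z| < 1\<close> gives \<open>F z = c\<close>.
\<close>

lemma norm_Cayley_less_1:
  fixes w a :: complex
  assumes "0 < Re w" "0 < Re a"
  shows "norm ((w - a) / (w + cnj a)) < 1"
proof -
  have "(norm (w - a))\<^sup>2 < (norm (w + cnj a))\<^sup>2"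
    using assms unfolding cmod_power2 by (simp add: power2_eq_square algebra_simps)
  then have "norm (w - a) < norm (w + cnj a)"
    by (meson norm_ge_zero power_less_imp_less_base)
  then show ?thesis
    by (simp add: norm_divide divide_less_eq)
qed

lemma eq_of_real_if_norms_le_sum:
  fixes a b :: complex
  assumes "norm a \<le> p" "norm b \<le> q" "a + b = of_real (p + q)"
  shows "a = of_real p"
proof -
  have "Re a = p"
    using assms complex_Re_le_cmod[of a] complex_Re_le_cmod[of b]
    by (auto simp: complex_eq_iff)
  then have "(Re a)\<^sup>2 + (Im a)\<^sup>2 \<le> (Re a)\<^sup>2"
    using assms(1) norm_ge_zero[of a] by (metis cmod_power2 power_mono)
  then have "Im a = 0"
    by simp
  with \<open>Re a = p\<close> show ?thesis
    by (simp add: complex_eq_iff)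
qed

lemma Re_add_mult_cnj_div_one_minus:
  fixes w z :: complex
  shows "Re ((w + z * cnj w) / (1 - z)) = (1 - (norm z)\<^sup>2) * Re w / (norm (1 - z))\<^sup>2"
  unfolding cmod_power2 by (simp add: Re_divide power2_eq_square algebra_simps)

lemma Re_add_mult_cnj_div_nonneg:
  fixes w z :: complex
  assumes "norm z < 1" "0 \<le> Re w"
  shows "0 \<le> Re ((w + z * cnj w) / (1 - z))"
proof -
  have "0 \<le> 1 - (norm z)\<^sup>2"
    using assms(1) by (simp add: abs_square_le_1 less_imp_le)
  then show ?thesis
    unfolding Re_add_mult_cnj_div_one_minus using assms(2) by simp
qed

lemma eq_if_add_mult_cnj_eq:
  fixes w c z :: complex
  assumes "w + z * cnj w = c + z * cnj c" "norm z < 1"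
  shows "w = c"
proof -
  have "w - c = - (z * cnj (w - c))"
    using assms(1) by (simp add: algebra_simps)
  then have "norm (w - c) = norm z * norm (w - c)"
    by (metis complex_mod_cnj norm_minus_cancel norm_mult)
  with assms(2) have "norm (w - c) = 0"
    by (metis mult_cancel_right2 norm_ge_zero order_less_irrefl)
  then show ?thesis
    by simp
qed

lemma holomorphic_Re_nonneg_constant_if_Re_zero:
  fixes A :: "complex \<Rightarrow> complex"
  assumes holA: "A holomorphic_on S" and S: "open S" "connected S"
    and Re_nonneg: "\<And>z. z \<in> S \<Longrightarrow> 0 \<le> Re (A z)"
    and z0: "z0 \<in> S" and Re_zero: "Re (A z0) = 0"
  shows "\<forall>z\<in>S. A z = A z0"
proof (cases "A constant_on S")
  case True
  then show ?thesis
    using z0 by (metis constant_on_def)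
next
  case False
  then have "open (A ` S)"
    using open_mapping_thm[OF holA S S(1)] by blast
  then obtain e where "e > 0" and e: "ball (A z0) e \<subseteq> A ` S"
    using z0 by (meson imageI openE)
  have "A z0 - of_real (e/2) \<in> ball (A z0) e"
    using \<open>e > 0\<close> by (simp add: dist_norm)
  then obtain w where "w \<in> S" "A w = A z0 - of_real (e/2)"
    using e by (metis imageE subsetD)
  then show ?thesis
    using Re_nonneg[of w] Re_zero \<open>e > 0\<close> by simp
qed

lemma Caratheodory_Re_pos:
  fixes A :: "complex \<Rightarrow> complex"
  assumes holA: "A holomorphic_on ball 0 1"
    and Re_pos: "\<And>z. z \<in> ball 0 1 \<Longrightarrow> 0 < Re (A z)"
  shows "norm (deriv A 0) \<le> 2 * Re (A 0)"
    and "deriv A 0 = of_real (2 * Re (A 0)) \<Longrightarrow> z \<in> ball 0 1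
          \<Longrightarrow> A z = (A 0 + cnj (A 0) * z) / (1 - z)"
proof -
  define a where "a = A 0"
  have "0 < Re a"
    using Re_pos[of 0] by (simp add: a_def)
  have den: "A z + cnj a \<noteq> 0" if "z \<in> ball 0 1" for z
    using Re_pos[OF that] \<open>0 < Re a\<close> by (auto simp: complex_eq_iff)
  \<comment> \<open>a Cayley transform: the right half-plane onto the disc, with \<open>A 0 \<mapsto> 0\<close>\<close>
  define \<omega> where "\<omega> z = (A z - a) / (A z + cnj a)" for z
  have hol\<omega>: "\<omega> holomorphic_on ball 0 1"
    unfolding \<omega>_def by (intro holomorphic_intros holA) (use den in auto)
  have "\<omega> 0 = 0"
    by (simp add: \<omega>_def a_def)
  have \<omega>_disc: "norm (\<omega> z) < 1" if "norm z < 1" for z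
    unfolding \<omega>_def using that by (intro norm_Cayley_less_1 Re_pos \<open>0 < Re a\<close>) simp
  have "(A has_field_derivative deriv A 0) (at 0)"
    using holomorphic_derivI[OF holA, of 0 UNIV] by simp
  then have "(\<omega> has_field_derivative deriv A 0 / of_real (2 * Re a)) (at 0)"
    unfolding \<omega>_def using \<open>0 < Re a\<close>
    by (auto intro!: derivative_eq_intros simp: a_def complex_add_cnj field_simps)
  then have deriv_\<omega>: "deriv A 0 = of_real (2 * Re a) * deriv \<omega> 0"
    using \<open>0 < Re a\<close> by (simp add: DERIV_imp_deriv)
  note Schwarz = Schwarz_Lemma[OF hol\<omega> \<open>\<omega> 0 = 0\<close> \<omega>_disc, of 0]
  show "norm (deriv A 0) \<le> 2 * Re (A 0)"
    using Schwarz(2) \<open>0 < Re a\<close>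
    by (simp add: deriv_\<omega> norm_mult a_def mult_left_le)
  assume "deriv A 0 = of_real (2 * Re (A 0))" and z: "z \<in> ball 0 1"
  then have "deriv \<omega> 0 = 1"
    using deriv_\<omega> \<open>0 < Re a\<close> by (simp add: a_def)
  then obtain \<beta> where \<beta>: "\<And>z. norm z < 1 \<Longrightarrow> \<omega> z = \<beta> * z"
    using Schwarz(3) by auto
  have "deriv \<omega> 0 = deriv (\<lambda>z. \<beta> * z) 0"
    by (rule complex_derivative_transform_within_open[OF hol\<omega>])
       (use \<beta> in \<open>auto intro: holomorphic_intros\<close>)
  then have "\<omega> z = z"
    using \<beta>[of z] z \<open>deriv \<omega> 0 = 1\<close> by simp
  then have "A z * (1 - z) = a + cnj a * z"
    using den[OF z] by (simp add: \<omega>_def field_simps)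
  moreover have "1 - z \<noteq> 0"
    using z by auto
  ultimately show "A z = (A 0 + cnj (A 0) * z) / (1 - z)"
    by (simp add: a_def field_simps)
qed

lemma Caratheodory_Re_nonneg:
  fixes A :: "complex \<Rightarrow> complex"
  assumes holA: "A holomorphic_on ball 0 1"
    and Re_nonneg: "\<And>z. z \<in> ball 0 1 \<Longrightarrow> 0 \<le> Re (A z)"
  shows "norm (deriv A 0) \<le> 2 * Re (A 0)"
    and "deriv A 0 = of_real (2 * Re (A 0)) \<Longrightarrow> z \<in> ball 0 1
          \<Longrightarrow> A z = (A 0 + cnj (A 0) * z) / (1 - z)"
proof -
  consider "Re (A 0) = 0" "\<And>z. z \<in> ball 0 1 \<Longrightarrow> A z = A 0"
    | "\<And>z. z \<in> ball 0 1 \<Longrightarrow> 0 < Re (A z)"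
  proof (cases "\<exists>z0\<in>ball 0 1. Re (A z0) = 0")
    case True
    then obtain z0 where z0: "z0 \<in> ball 0 1" "Re (A z0) = 0"
      by blast
    have "A z = A z0" if "z \<in> ball 0 1" for z
      using holomorphic_Re_nonneg_constant_if_Re_zero[OF holA open_ball connected_ball Re_nonneg z0]
        that by blast
    moreover have "A 0 = A z0"
      using calculation[of 0] by simp
    ultimately show ?thesis
      using that(1) z0(2) by metis
  next
    case False
    have "0 < Re (A z)" if "z \<in> ball 0 1" for z
      using False Re_nonneg[OF that] that by (auto simp: order_le_less)
    then show ?thesis
      using that(2) by blast
  qed
  note cases = this
  have deriv_const: "deriv A 0 = 0" if "\<And>z. z \<in> ball 0 1 \<Longrightarrow> A z = A 0"
  proof -
    have "deriv A 0 = deriv (\<lambda>_. A 0) 0"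
      by (rule complex_derivative_transform_within_open[OF holA holomorphic_on_const open_ball _ that])
         simp_all
    then show ?thesis
      by simp
  qed
  from cases show "norm (deriv A 0) \<le> 2 * Re (A 0)"
  proof cases
    case 1
    show ?thesis
      using 1(1) deriv_const[OF 1(2)] by simp
  next
    case 2
    then show ?thesis
      by (rule Caratheodory_Re_pos(1)[OF holA])
  qed
  assume "deriv A 0 = of_real (2 * Re (A 0))" and z: "z \<in> ball 0 1"
  from cases show "A z = (A 0 + cnj (A 0) * z) / (1 - z)"
  proof cases
    case 1
    have "A 0 + cnj (A 0) * z = A 0 * (1 - z)"
      using 1(1) by (simp add: complex_eq_iff algebra_simps)
    moreover have "1 - z \<noteq> 0"
      using z by auto
    ultimately show ?thesis
      using 1(2)[OF z] by simp
  next
    case 2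
    show ?thesis
      by (rule Caratheodory_Re_pos(2)[OF holA 2 \<open>deriv A 0 = _\<close> z])
  qed
qed

lemma extremal_if_Re_nonneg_split_of_Herglotz_kernel:
  fixes A B :: "complex \<Rightarrow> complex"
  assumes holA: "A holomorphic_on ball 0 1" and holB: "B holomorphic_on ball 0 1"
    and Re_A: "\<And>z. z \<in> ball 0 1 \<Longrightarrow> 0 \<le> Re (A z)"
    and Re_B: "\<And>z. z \<in> ball 0 1 \<Longrightarrow> 0 \<le> Re (B z)"
    and sum: "\<And>z. z \<in> ball 0 1 \<Longrightarrow> A z + B z = (1 + z) / (1 - z)"
    and z: "z \<in> ball 0 1"
  shows "A z = (A 0 + cnj (A 0) * z) / (1 - z)"
proof -
  have "A 0 + B 0 = 1"
    using sum[of 0] by simp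
  then have "Re (A 0 + B 0) = 1"
    by simp
  then have Re_sum: "2 * Re (A 0) + 2 * Re (B 0) = 2"
    by simp
  \<comment> \<open>the kernel attains Caratheodory's bound, so both summands must attain it\<close>
  have "deriv A 0 + deriv B 0 = deriv (\<lambda>z. A z + B z) 0"
    using holA holB by (simp add: holomorphic_on_imp_differentiable_at)
  also have "\<dots> = deriv (\<lambda>z. (1 + z) / (1 - z)) 0"
    by (rule complex_derivative_transform_within_open[OF _ _ open_ball _ sum])
       (auto intro!: holomorphic_intros holA holB)
  also have "\<dots> = 2"
    by (rule DERIV_imp_deriv) (auto intro!: derivative_eq_intros)
  finally have deriv_sum: "deriv A 0 + deriv B 0 = of_real (2 * Re (A 0) + 2 * Re (B 0))"
    unfolding Re_sum by simp
  have "deriv A 0 = of_real (2 * Re (A 0))"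
    using eq_of_real_if_norms_le_sum[OF Caratheodory_Re_nonneg(1)[OF holA Re_A]
        Caratheodory_Re_nonneg(1)[OF holB Re_B] deriv_sum] .
  then show ?thesis
    using Caratheodory_Re_nonneg(2)[OF holA Re_A _ z] by blast
qed

theorem theorem1:
  fixes F :: "complex \<Rightarrow> complex"
  assumes "\<And>z. z \<in> ball 0 1 \<Longrightarrow> 0 \<le> Re (F z) \<and> Re (F z) \<le> 1"
    and "(\<lambda>z. F z + z * cnj (F z)) holomorphic_on ball 0 1"
  shows "\<exists>c. \<forall>z \<in> ball 0 1. F z = c"
proof -
  define P where "P z = (F z + z * cnj (F z)) / (1 - z)" for z
  define B where "B z = ((1 - F z) + z * cnj (1 - F z)) / (1 - z)" for z
  have one_minus_nz: "1 - z \<noteq> 0" if "z \<in> ball 0 1" for z :: complex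
    using that by auto
  have holP: "P holomorphic_on ball 0 1"
    unfolding P_def by (intro holomorphic_intros assms(2)) (use one_minus_nz in auto)
  have B_eq: "B = (\<lambda>z. (1 + z) / (1 - z) - P z)"
    unfolding B_def P_def diff_divide_distrib[symmetric] by (simp add: algebra_simps)
  have holB: "B holomorphic_on ball 0 1"
    unfolding B_eq by (intro holomorphic_intros holP) (use one_minus_nz in auto)
  have sum: "P z + B z = (1 + z) / (1 - z)" for z
    unfolding B_eq by simp
  have Re_P: "0 \<le> Re (P z)" if "z \<in> ball 0 1" for z
    unfolding P_def using that assms(1)[OF that] by (intro Re_add_mult_cnj_div_nonneg) auto
  have Re_B: "0 \<le> Re (B z)" if "z \<in> ball 0 1" for z
    unfolding B_def using that assms(1)[OF that] by (intro Re_add_mult_cnj_div_nonneg) auto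
  have "F z = F 0" if "z \<in> ball 0 1" for z
  proof (rule eq_if_add_mult_cnj_eq)
    have "P z = (P 0 + cnj (P 0) * z) / (1 - z)"
      using extremal_if_Re_nonneg_split_of_Herglotz_kernel[OF holP holB Re_P Re_B sum that] .
    then show "F z + z * cnj (F z) = F 0 + z * cnj (F 0)"
      using one_minus_nz[OF that] by (simp add: P_def mult.commute)
    show "norm z < 1"
      using that by simp
  qed
  then show ?thesis
    by blast
qed

end
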